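(* Let $\Gamma=(V,E)$ be a finite simplicial graph such that $A_\Gamma$ has non-trivial centre. Let $S\subseteq V$ be the set of social vertices of $\Gamma$, $k=|S|$ (so $k\ge 1$), and $\Delta=\Gamma\setminus S$, so that $\Gamma$ is the join of $S$ and $\Delta$. Then the subgroup $\mathcal{L}$ of $\mathrm{Aut}(A_\Gamma)$ generated by all lateral transvections $\tau_{sa}$ ($s\in S$, $a\in\Delta$) is isomorphic to $\mathbb{Z}^{k|\Delta|}$.
   Context: For a finite simplicial graph $\Gamma=(V,E)$, $A_\Gamma=\langle v\in V\mid [v,w]=1 \text{ for }(v,w)\in E\rangle$. A vertex $s$ is social if it is adjacent to every other vertex of $\Gamma$. The join of two graphs is their disjoint union together with all edges between a vertex of the first and a vertex of the second. For $s\in S$ and $a\in\Delta$ (vertices of $\Delta$), the lateral transvection $\tau_{sa}\in\mathrm{Aut}(A_\Gamma)$ is the automorphism sending $a\mapsto as$ and fixing all other generators $v\in V$. Here $|\Delta|$ denotes the number of vertices of $\Delta$. *)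

theory Defs
  imports "HOL-Algebra.Algebra"
begin

definition simplicial_graph :: "'a set \<Rightarrow> ('a \<times> 'a) set \<Rightarrow> bool" where
  "simplicial_graph V E \<longleftrightarrow> finite V \<and> E \<subseteq> V \<times> V \<and> sym E \<and> irrefl E"

text \<open>Letters of words: (v, True) is v, (v, False) is v inverse.\<close>
type_synonym 'a letter = "'a \<times> bool"

definition inv_letter :: "'a letter \<Rightarrow> 'a letter" where
  "inv_letter x = (fst x, \<not> snd x)"

inductive raag_step :: "('a \<times> 'a) set \<Rightarrow> 'a letter list \<Rightarrow> 'a letter list \<Rightarrow> bool"
  for E where
  cancel: "raag_step E (u @ [x, inv_letter x] @ w) (u @ w)"
| commute: "(fst x, fst y) \<in> E \<Longrightarrow> raag_step E (u @ [x, y] @ w) (u @ [y, x] @ w)"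

definition raag_rel :: "'a set \<Rightarrow> ('a \<times> 'a) set \<Rightarrow> ('a letter list \<times> 'a letter list) set" where
  "raag_rel V E = (({(u, w). raag_step E u w} \<inter> (lists (V \<times> UNIV) \<times> lists (V \<times> UNIV)))
                    \<union> ({(u, w). raag_step E u w} \<inter> (lists (V \<times> UNIV) \<times> lists (V \<times> UNIV)))\<inverse>)\<^sup>*
                   \<inter> (lists (V \<times> UNIV) \<times> lists (V \<times> UNIV))"

definition raag_mult :: "'a set \<Rightarrow> ('a \<times> 'a) set \<Rightarrow> 'a letter list set \<Rightarrow> 'a letter list set \<Rightarrow> 'a letter list set" where
  "raag_mult V E P Q = raag_rel V E `` {(SOME u. u \<in> P) @ (SOME w. w \<in> Q)}"

definition RAAG :: "'a set \<Rightarrow> ('a \<times> 'a) set \<Rightarrow> ('a letter list set) monoid" where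
  "RAAG V E = \<lparr> carrier = lists (V \<times> UNIV) // raag_rel V E,
                monoid.mult = raag_mult V E,
                monoid.one = raag_rel V E `` {[]} \<rparr>"

definition centre :: "('g, 'b) monoid_scheme \<Rightarrow> 'g set" where
  "centre G = {z \<in> carrier G. \<forall>g \<in> carrier G. z \<otimes>\<^bsub>G\<^esub> g = g \<otimes>\<^bsub>G\<^esub> z}"

definition social :: "'a set \<Rightarrow> ('a \<times> 'a) set \<Rightarrow> 'a \<Rightarrow> bool" where
  "social V E s \<longleftrightarrow> s \<in> V \<and> (\<forall>v \<in> V. v \<noteq> s \<longrightarrow> (s, v) \<in> E)"

definition transv_letter :: "'a \<Rightarrow> 'a \<Rightarrow> 'a letter \<Rightarrow> 'a letter list" where
  "transv_letter s a x =
     (if fst x = a then (if snd x then [(a, True), (s, True)] else [(s, False), (a, False)])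
      else [x])"

definition lateral_transvection ::
  "'a set \<Rightarrow> ('a \<times> 'a) set \<Rightarrow> 'a \<Rightarrow> 'a \<Rightarrow> 'a letter list set \<Rightarrow> 'a letter list set" where
  "lateral_transvection V E s a =
     (\<lambda>cl \<in> carrier (RAAG V E). raag_rel V E `` {concat (map (transv_letter s a) (SOME u. u \<in> cl))})"

end

theory Submission
  imports Defs
begin

text \<open>
  Every social vertex s is central in \<open>A\<^sub>\<Gamma>\<close>. Hence for integers c(s, a), indexed by
  \<open>S \<times> \<Delta>\<close>, the assignment \<open>a \<mapsto> a \<Prod>\<^sub>s s\<^bsup>c(s,a)\<^esup>\<close> for \<open>a \<in> \<Delta>\<close>, fixing S, respects the
  commutation relations and extends to an endomorphism \<open>T\<^sub>c\<close>. Comparing on generators gives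
  \<open>T\<^sub>c \<circ> T\<^sub>d = T\<^bsub>c+d\<^esub>\<close>, so every \<open>T\<^sub>c\<close> is an automorphism and \<open>c \<mapsto> T\<^sub>c\<close> is a homomorphism
  from \<open>\<int>\<^bsup>S\<times>\<Delta>\<^esup>\<close> sending the basis vector (s, a) to \<open>\<tau>\<^sub>s\<^sub>a\<close>. Its image is the group generated
  by the lateral transvections, and it is injective because the exponent sum of s in \<open>T\<^sub>c(a)\<close>
  is c(s, a).
\<close>

section \<open>Words and the defining relation\<close>

abbreviation words :: "'a set \<Rightarrow> 'a letter list set" where
  "words V \<equiv> lists (V \<times> UNIV)"

definition raag_moves :: "'a set \<Rightarrow> ('a \<times> 'a) set \<Rightarrow> ('a letter list \<times> 'a letter list) set" where
  "raag_moves V E = {(u, w). raag_step E u w} \<inter> (words V \<times> words V)"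

lemma raag_rel_eq: "raag_rel V E = (raag_moves V E \<union> (raag_moves V E)\<inverse>)\<^sup>* \<inter> (words V \<times> words V)"
  unfolding raag_rel_def raag_moves_def by simp

lemma raag_rel_words: "(u, w) \<in> raag_rel V E \<Longrightarrow> u \<in> words V \<and> w \<in> words V"
  unfolding raag_rel_def by auto

lemma raag_step_imp_raag_rel:
  "raag_step E u w \<Longrightarrow> u \<in> words V \<Longrightarrow> w \<in> words V \<Longrightarrow> (u, w) \<in> raag_rel V E"
  unfolding raag_rel_eq raag_moves_def by auto

lemma equiv_raag_rel: "equiv (words V) (raag_rel V E)"
proof -
  let ?M = "raag_moves V E \<union> (raag_moves V E)\<inverse>"
  have "sym (?M\<^sup>*)" by (simp add: sym_Un_converse sym_rtrancl)
  then show ?thesis unfolding raag_rel_eq equiv_def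
    by (auto simp: refl_on_def sym_def trans_def simp del: in_lists_conv_set intro: rtrancl_trans)
qed

lemma raag_rel_invariant:
  assumes "(u, w) \<in> raag_rel V E"
    and "\<And>u w. raag_step E u w \<Longrightarrow> u \<in> words V \<Longrightarrow> w \<in> words V \<Longrightarrow> f u = f w"
  shows "f u = f w"
proof -
  have "(u, w) \<in> (raag_moves V E \<union> (raag_moves V E)\<inverse>)\<^sup>*" using assms(1) by (simp add: raag_rel_eq)
  then show ?thesis
    by (induction rule: rtrancl_induct) (auto simp: raag_moves_def dest: assms(2))
qed

lemma raag_step_in_context: "raag_step E u w \<Longrightarrow> raag_step E (p @ u @ q) (p @ w @ q)"
proof (induction rule: raag_step.induct)
  case (cancel u x w)
  show ?case using raag_step.cancel[of E "p @ u" x "w @ q"] by simp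
next
  case (commute x y u w)
  then show ?case using raag_step.commute[of x y E "p @ u" "w @ q"] by simp
qed

lemma raag_rel_in_context:
  assumes "(u, w) \<in> raag_rel V E" "p \<in> words V" "q \<in> words V"
  shows "(p @ u @ q, p @ w @ q) \<in> raag_rel V E"
proof -
  let ?M = "raag_moves V E \<union> (raag_moves V E)\<inverse>"
  have "(u, w) \<in> ?M\<^sup>*" using assms(1) by (simp add: raag_rel_eq)
  then have "(p @ u @ q, p @ w @ q) \<in> ?M\<^sup>*"
  proof (induction rule: rtrancl_induct)
    case (step y z)
    have "(p @ y @ q, p @ z @ q) \<in> ?M"
      using step(2) assms(2,3) by (auto simp: raag_moves_def intro: raag_step_in_context)
    with step(3) show ?case by (rule rtrancl_into_rtrancl)
  qed simp
  then show ?thesis using assms raag_rel_words[OF assms(1)] by (simp add: raag_rel_eq)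
qed

lemma raag_rel_append:
  assumes "(u, u') \<in> raag_rel V E" "(w, w') \<in> raag_rel V E"
  shows "(u @ w, u' @ w') \<in> raag_rel V E"
proof -
  have "(u @ w, u' @ w) \<in> raag_rel V E"
    using raag_rel_in_context[OF assms(1), of "[]" w] raag_rel_words[OF assms(2)] by simp
  moreover have "(u' @ w, u' @ w') \<in> raag_rel V E"
    using raag_rel_in_context[OF assms(2), of u' "[]"] raag_rel_words[OF assms(1)] by simp
  ultimately show ?thesis using equiv_raag_rel[of V E] unfolding equiv_def trans_def by blast
qed

definition inv_word :: "'a letter list \<Rightarrow> 'a letter list" where
  "inv_word u = rev (map inv_letter u)"

lemma inv_word_inv_word [simp]: "inv_word (inv_word u) = u"
  by (simp add: inv_word_def rev_map comp_def inv_letter_def)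

lemma inv_word_in_words: "u \<in> words V \<Longrightarrow> inv_word u \<in> words V"
  by (induction u) (auto simp: inv_word_def inv_letter_def)

lemma raag_rel_append_inv_word: "u \<in> words V \<Longrightarrow> (u @ inv_word u, []) \<in> raag_rel V E"
proof (induction u)
  case Nil
  then show ?case using equiv_raag_rel[of V E] by (simp add: equiv_def refl_on_def inv_word_def)
next
  case (Cons x u)
  have x: "[x] \<in> words V" "[inv_letter x] \<in> words V" and u: "u \<in> words V"
    using Cons.prems by (auto simp: inv_letter_def)
  have "([x] @ (u @ inv_word u) @ [inv_letter x], [x] @ [] @ [inv_letter x]) \<in> raag_rel V E"
    using raag_rel_in_context[OF Cons.IH[OF u] x] .
  moreover have "([] @ [x, inv_letter x] @ [], []) \<in> raag_rel V E"
    by (rule raag_step_imp_raag_rel) (use x raag_step.cancel[of E "[]" x "[]"] in simp_all)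
  ultimately show ?case
    using equiv_raag_rel[of V E] unfolding equiv_def trans_def by (auto simp: inv_word_def)
qed

lemma transv_letter_in_words:
  "s \<in> V \<Longrightarrow> a \<in> V \<Longrightarrow> fst x \<in> V \<Longrightarrow> transv_letter s a x \<in> words V"
  by (auto simp: transv_letter_def mem_Times_iff)

lemma transv_letter_inv_letter: "transv_letter s a (inv_letter x) = inv_word (transv_letter s a x)"
  by (auto simp: transv_letter_def inv_letter_def inv_word_def)

section \<open>Evaluating words in a group\<close>

definition letter_eval :: "('g, 'b) monoid_scheme \<Rightarrow> ('a \<Rightarrow> 'g) \<Rightarrow> 'a letter \<Rightarrow> 'g" where
  "letter_eval G g x = (if snd x then g (fst x) else inv\<^bsub>G\<^esub> g (fst x))"

definition word_eval :: "('g, 'b) monoid_scheme \<Rightarrow> ('a \<Rightarrow> 'g) \<Rightarrow> 'a letter list \<Rightarrow> 'g" where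
  "word_eval G g u = foldr (\<lambda>x r. letter_eval G g x \<otimes>\<^bsub>G\<^esub> r) u \<one>\<^bsub>G\<^esub>"

definition edge_commuting :: "'a set \<Rightarrow> ('a \<times> 'a) set \<Rightarrow> ('g, 'b) monoid_scheme \<Rightarrow> ('a \<Rightarrow> 'g) \<Rightarrow> bool" where
  "edge_commuting V E G g \<longleftrightarrow>
     (\<forall>v w. (v, w) \<in> E \<longrightarrow> v \<in> V \<longrightarrow> w \<in> V \<longrightarrow> g v \<otimes>\<^bsub>G\<^esub> g w = g w \<otimes>\<^bsub>G\<^esub> g v)"

lemma word_eval_Nil [simp]: "word_eval G g [] = \<one>\<^bsub>G\<^esub>"
  by (simp add: word_eval_def)

lemma word_eval_Cons [simp]: "word_eval G g (x # u) = letter_eval G g x \<otimes>\<^bsub>G\<^esub> word_eval G g u"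
  by (simp add: word_eval_def)

lemma word_eval_cong:
  "(\<And>v. v \<in> V \<Longrightarrow> g v = g' v) \<Longrightarrow> u \<in> words V \<Longrightarrow> word_eval G g u = word_eval G g' u"
  by (induction u) (auto simp: letter_eval_def mem_Times_iff)

context group
begin

lemma inv_commute:
  assumes "a \<in> carrier G" "b \<in> carrier G" "a \<otimes> b = b \<otimes> a"
  shows "inv a \<otimes> b = b \<otimes> inv a"
  using assms by (metis inv_solve_left inv_closed m_assoc m_closed r_inv r_one)

lemma letter_eval_closed: "g ` V \<subseteq> carrier G \<Longrightarrow> fst x \<in> V \<Longrightarrow> letter_eval G g x \<in> carrier G"
  by (auto simp: letter_eval_def image_subset_iff)

lemma word_eval_closed: "g ` V \<subseteq> carrier G \<Longrightarrow> u \<in> words V \<Longrightarrow> word_eval G g u \<in> carrier G"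
  by (induction u) (auto simp: mem_Times_iff intro!: letter_eval_closed)

lemma word_eval_append:
  "g ` V \<subseteq> carrier G \<Longrightarrow> u \<in> words V \<Longrightarrow> w \<in> words V \<Longrightarrow>
    word_eval G g (u @ w) = word_eval G g u \<otimes> word_eval G g w"
  by (induction u) (auto simp: m_assoc mem_Times_iff letter_eval_closed word_eval_closed)

lemma letter_eval_inv_letter:
  "g ` V \<subseteq> carrier G \<Longrightarrow> fst x \<in> V \<Longrightarrow> letter_eval G g (inv_letter x) = inv letter_eval G g x"
  by (auto simp: letter_eval_def inv_letter_def)

lemma letter_eval_commute:
  assumes "c \<in> carrier G" "g (fst x) \<in> carrier G" "c \<otimes> g (fst x) = g (fst x) \<otimes> c"
  shows "c \<otimes> letter_eval G g x = letter_eval G g x \<otimes> c"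
  using assms inv_commute[of "g (fst x)" c] by (auto simp: letter_eval_def)

lemma word_eval_commute:
  assumes g: "g ` V \<subseteq> carrier G" and z: "z \<in> carrier G"
    and zg: "\<And>v. v \<in> V \<Longrightarrow> z \<otimes> g v = g v \<otimes> z"
  shows "u \<in> words V \<Longrightarrow> z \<otimes> word_eval G g u = word_eval G g u \<otimes> z"
proof (induction u)
  case (Cons x u)
  then have x: "fst x \<in> V" and u: "u \<in> words V" by (auto simp: mem_Times_iff)
  have l: "letter_eval G g x \<in> carrier G" and r: "word_eval G g u \<in> carrier G"
    using x u g by (auto intro: letter_eval_closed word_eval_closed)
  have zl: "z \<otimes> letter_eval G g x = letter_eval G g x \<otimes> z"
    using x g z zg by (intro letter_eval_commute) auto
  have "z \<otimes> (letter_eval G g x \<otimes> word_eval G g u) = letter_eval G g x \<otimes> (z \<otimes> word_eval G g u)"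
    using l r z zl by (simp flip: m_assoc)
  also have "\<dots> = (letter_eval G g x \<otimes> word_eval G g u) \<otimes> z"
    using l r z Cons.IH[OF u] by (simp add: m_assoc)
  finally show ?case by simp
qed (simp add: z)

lemma word_eval_raag_step:
  assumes g: "g ` V \<subseteq> carrier G" "edge_commuting V E G g"
    and step: "raag_step E u w" and uw: "u \<in> words V" "w \<in> words V"
  shows "word_eval G g u = word_eval G g w"
  using step
proof cases
  case (cancel p x q)
  have x: "fst x \<in> V" and pq: "p \<in> words V" "q \<in> words V" "[x, inv_letter x] \<in> words V"
    using uw cancel by auto
  have "letter_eval G g x \<otimes> letter_eval G g (inv_letter x) = \<one>"
    using x g by (simp add: letter_eval_inv_letter letter_eval_closed)
  then have "letter_eval G g x \<otimes> (letter_eval G g (inv_letter x) \<otimes> word_eval G g q) = word_eval G g q"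
    using x g pq by (simp add: letter_eval_closed word_eval_closed inv_letter_def flip: m_assoc)
  then show ?thesis
    using pq g unfolding cancel by (simp add: word_eval_append[of g V])
next
  case (commute x y p q)
  have xy: "fst x \<in> V" "fst y \<in> V" and pq: "p \<in> words V" "q \<in> words V" "[x, y] \<in> words V" "[y, x] \<in> words V"
    using uw commute by auto
  have gxy: "g (fst x) \<otimes> g (fst y) = g (fst y) \<otimes> g (fst x)"
    using g(2) commute(3) xy unfolding edge_commuting_def by blast
  have "g (fst y) \<otimes> letter_eval G g x = letter_eval G g x \<otimes> g (fst y)"
    using gxy xy g by (intro letter_eval_commute) auto
  then have "letter_eval G g x \<otimes> letter_eval G g y = letter_eval G g y \<otimes> letter_eval G g x"
    using xy g letter_eval_commute[of "letter_eval G g x" g y] by (auto simp: letter_eval_closed)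
  then have "letter_eval G g x \<otimes> (letter_eval G g y \<otimes> word_eval G g q)
      = letter_eval G g y \<otimes> (letter_eval G g x \<otimes> word_eval G g q)"
    using xy g pq by (simp add: letter_eval_closed word_eval_closed flip: m_assoc)
  then show ?thesis
    using pq g unfolding commute by (simp add: word_eval_append[of g V])
qed

lemma hom_word_eval:
  assumes "group H" "h \<in> hom G H" "g ` V \<subseteq> carrier G" "u \<in> words V"
  shows "h (word_eval G g u) = word_eval H (h \<circ> g) u"
proof -
  interpret h: group_hom G H h
    using assms(1,2) is_group by (simp add: group_hom_def group_hom_axioms_def)
  show ?thesis using assms(3,4)
    by (induction u) (auto simp: letter_eval_def mem_Times_iff image_subset_iff word_eval_closed)
qed

end

section \<open>The right-angled Artin group and its universal property\<close>

locale raag =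
  fixes V :: "'a set" and E :: "('a \<times> 'a) set"
begin

abbreviation A :: "'a letter list set monoid" where
  "A \<equiv> RAAG V E"

abbreviation word_class :: "'a letter list \<Rightarrow> 'a letter list set" where
  "word_class u \<equiv> raag_rel V E `` {u}"

lemma word_class_eq_iff:
  "u \<in> words V \<Longrightarrow> w \<in> words V \<Longrightarrow> word_class u = word_class w \<longleftrightarrow> (u, w) \<in> raag_rel V E"
  using eq_equiv_class_iff[OF equiv_raag_rel] by blast

lemma word_class_eqI: "(u, w) \<in> raag_rel V E \<Longrightarrow> word_class u = word_class w"
  using word_class_eq_iff raag_rel_words by blast

lemma raag_rel_some_rep:
  assumes "u \<in> words V"
  shows "(u, SOME w. w \<in> word_class u) \<in> raag_rel V E"
proof -
  have "u \<in> word_class u" using equiv_class_self[OF equiv_raag_rel assms] .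
  then have "(SOME w. w \<in> word_class u) \<in> word_class u" by (rule someI)
  then show ?thesis by simp
qed

lemma carrier_RAAG: "carrier A = word_class ` words V"
  by (auto simp: RAAG_def quotient_def)

lemma word_class_in_carrier [simp]: "u \<in> words V \<Longrightarrow> word_class u \<in> carrier A"
  by (auto simp: carrier_RAAG)

lemma carrier_RAAGE:
  assumes "P \<in> carrier A"
  obtains u where "u \<in> words V" "P = word_class u"
  using assms by (auto simp: carrier_RAAG)

lemma mult_word_class:
  assumes "u \<in> words V" "w \<in> words V"
  shows "word_class u \<otimes>\<^bsub>A\<^esub> word_class w = word_class (u @ w)"
proof -
  have "(u @ w, (SOME x. x \<in> word_class u) @ (SOME x. x \<in> word_class w)) \<in> raag_rel V E"
    using assms by (intro raag_rel_append raag_rel_some_rep)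
  then show ?thesis by (simp add: RAAG_def raag_mult_def word_class_eqI)
qed

lemma one_RAAG: "\<one>\<^bsub>A\<^esub> = word_class []"
  by (simp add: RAAG_def)

lemma group_RAAG: "group A"
proof (rule groupI)
  fix P Q assume "P \<in> carrier A" "Q \<in> carrier A"
  then show "P \<otimes>\<^bsub>A\<^esub> Q \<in> carrier A"
    by (elim carrier_RAAGE) (simp del: in_lists_conv_set add: mult_word_class)
next
  fix P Q R assume "P \<in> carrier A" "Q \<in> carrier A" "R \<in> carrier A"
  then show "P \<otimes>\<^bsub>A\<^esub> Q \<otimes>\<^bsub>A\<^esub> R = P \<otimes>\<^bsub>A\<^esub> (Q \<otimes>\<^bsub>A\<^esub> R)"
    by (elim carrier_RAAGE) (simp del: in_lists_conv_set add: mult_word_class)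
next
  fix P assume "P \<in> carrier A"
  then show "\<one>\<^bsub>A\<^esub> \<otimes>\<^bsub>A\<^esub> P = P"
    by (elim carrier_RAAGE) (simp del: in_lists_conv_set add: mult_word_class one_RAAG)
next
  fix P assume "P \<in> carrier A"
  then obtain u where u: "u \<in> words V" "P = word_class u" by (elim carrier_RAAGE)
  have "word_class (inv_word u) \<otimes>\<^bsub>A\<^esub> P = \<one>\<^bsub>A\<^esub>"
    using u inv_word_in_words[OF u(1)] raag_rel_append_inv_word[OF inv_word_in_words[OF u(1)], of E]
    by (simp del: in_lists_conv_set add: mult_word_class one_RAAG word_class_eqI)
  then show "\<exists>Q \<in> carrier A. Q \<otimes>\<^bsub>A\<^esub> P = \<one>\<^bsub>A\<^esub>"
    using inv_word_in_words[OF u(1)] word_class_in_carrier by blast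
qed (simp add: one_RAAG)

sublocale group A
  by (rule group_RAAG)

definition generator :: "'a \<Rightarrow> 'a letter list set" where
  "generator v = word_class [(v, True)]"

lemma generator_closed [simp]: "v \<in> V \<Longrightarrow> generator v \<in> carrier A"
  by (simp add: generator_def)

lemma generator_image: "generator ` V \<subseteq> carrier A"
  by auto

lemma word_class_inv_word: "u \<in> words V \<Longrightarrow> word_class (inv_word u) = inv\<^bsub>A\<^esub> word_class u"
  using raag_rel_append_inv_word[of "inv_word u" V E] inv_word_in_words[of u V]
  by (intro inv_equality[symmetric]) (simp_all del: in_lists_conv_set add: mult_word_class one_RAAG word_class_eqI)

lemma word_class_concat_map:
  assumes f: "\<And>x. fst x \<in> V \<Longrightarrow> f x \<in> words V"
    and f_inv: "\<And>x. fst x \<in> V \<Longrightarrow> f (inv_letter x) = inv_word (f x)"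
  shows "u \<in> words V \<Longrightarrow> word_class (concat (map f u)) = word_eval A (\<lambda>v. word_class (f (v, True))) u"
proof (induction u)
  case Nil
  then show ?case by (simp add: one_RAAG)
next
  case (Cons x u)
  then have x: "fst x \<in> V" and u: "u \<in> words V" by (auto simp: mem_Times_iff)
  have "set (f y) \<subseteq> V \<times> UNIV" if "y \<in> set u" for y
    using that u f[of y] by (auto simp: mem_Times_iff)
  then have rest: "concat (map f u) \<in> words V" by fastforce
  have "word_class (f x) = letter_eval A (\<lambda>v. word_class (f (v, True))) x"
  proof (cases x)
    case (Pair v b)
    show ?thesis
    proof (cases b)
      case False
      then have "f x = inv_word (f (v, True))"
        using f_inv[of "(v, True)"] x Pair by (simp add: inv_letter_def)
      then show ?thesis
        using f[of "(v, True)"] x Pair False by (simp add: letter_eval_def word_class_inv_word)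
    qed (simp add: Pair letter_eval_def)
  qed
  then show ?case
    using Cons.IH[OF u] mult_word_class[OF f[OF x] rest] by simp
qed

lemma word_class_eq_word_eval: "u \<in> words V \<Longrightarrow> word_class u = word_eval A generator u"
  using word_class_concat_map[of "\<lambda>x. [x]" u]
  by (simp add: inv_word_def mem_Times_iff generator_def[abs_def])

lemma some_rep_in_words: "P \<in> carrier A \<Longrightarrow> (SOME u. u \<in> P) \<in> words V"
  by (elim carrier_RAAGE) (metis raag_rel_some_rep raag_rel_words)

definition lift :: "('g, 'b) monoid_scheme \<Rightarrow> ('a \<Rightarrow> 'g) \<Rightarrow> 'a letter list set \<Rightarrow> 'g" where
  "lift H g = (\<lambda>P \<in> carrier A. word_eval H g (SOME u. u \<in> P))"

lemma lift_word_class: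
  assumes "group H" "g ` V \<subseteq> carrier H" "edge_commuting V E H g" "u \<in> words V"
  shows "lift H g (word_class u) = word_eval H g u"
proof -
  have "word_eval H g u = word_eval H g (SOME w. w \<in> word_class u)"
    using raag_rel_some_rep[OF assms(4)]
    by (rule raag_rel_invariant[where f = "word_eval H g"]) (rule group.word_eval_raag_step[OF assms(1-3)])
  then show ?thesis using assms(4) by (simp add: lift_def)
qed

lemma lift_hom:
  assumes "group H" "g ` V \<subseteq> carrier H" "edge_commuting V E H g"
  shows "lift H g \<in> hom A H"
proof -
  interpret H: group H by fact
  show ?thesis
  proof (rule homI)
    fix P assume "P \<in> carrier A"
    then show "lift H g P \<in> carrier H"
      by (elim carrier_RAAGE) (simp del: in_lists_conv_set add: assms lift_word_class H.word_eval_closed[OF assms(2)])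
  next
    fix P Q assume "P \<in> carrier A" "Q \<in> carrier A"
    then show "lift H g (P \<otimes>\<^bsub>A\<^esub> Q) = lift H g P \<otimes>\<^bsub>H\<^esub> lift H g Q"
      by (elim carrier_RAAGE)
        (simp del: in_lists_conv_set add: assms lift_word_class mult_word_class H.word_eval_append[OF assms(2)])
  qed
qed

lemma lift_generator:
  assumes "group H" "g ` V \<subseteq> carrier H" "edge_commuting V E H g" "v \<in> V"
  shows "lift H g (generator v) = g v"
proof -
  interpret H: group H by fact
  have "g v \<in> carrier H" using assms(2,4) by auto
  then show ?thesis
    using assms lift_word_class[OF assms(1-3), of "[(v, True)]"]
    by (simp add: generator_def letter_eval_def)
qed

lemma hom_eqI_on_generators:
  assumes H: "group H" and h: "h \<in> hom A H" "h' \<in> hom A H"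
    and gen: "\<And>v. v \<in> V \<Longrightarrow> h (generator v) = h' (generator v)" and P: "P \<in> carrier A"
  shows "h P = h' P"
proof -
  obtain u where u: "u \<in> words V" "P = word_class u" using P by (rule carrier_RAAGE)
  have "word_eval H (h \<circ> generator) u = word_eval H (h' \<circ> generator) u"
    using u(1) gen by (intro word_eval_cong) auto
  then show ?thesis
    using u hom_word_eval[OF H h(1) generator_image] hom_word_eval[OF H h(2) generator_image]
    by (simp add: word_class_eq_word_eval)
qed

end

section \<open>Central twists\<close>

context group
begin

lemma centre_commute: "z \<in> centre G \<Longrightarrow> x \<in> carrier G \<Longrightarrow> z \<otimes> x = x \<otimes> z"
  by (simp add: centre_def)

lemma subgroup_centre: "subgroup (centre G) G"
proof (rule subgroupI)
  show "centre G \<subseteq> carrier G" by (auto simp: centre_def)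
  have "\<one> \<in> centre G" by (simp add: centre_def)
  then show "centre G \<noteq> {}" by blast
next
  fix z assume z: "z \<in> centre G"
  then show "inv z \<in> centre G"
    using inv_commute[of z] by (auto simp: centre_def)
next
  fix z z' assume z: "z \<in> centre G" and z': "z' \<in> centre G"
  have zz': "z \<in> carrier G" "z' \<in> carrier G" using z z' by (auto simp: centre_def)
  have "z \<otimes> z' \<otimes> x = x \<otimes> (z \<otimes> z')" if x: "x \<in> carrier G" for x
  proof -
    have "z \<otimes> z' \<otimes> x = z \<otimes> (x \<otimes> z')"
      using x zz' by (simp add: m_assoc centre_commute[OF z' x])
    also have "\<dots> = x \<otimes> (z \<otimes> z')"
      using x zz' by (simp add: centre_commute[OF z x] flip: m_assoc)
    finally show ?thesis .
  qed
  then show "z \<otimes> z' \<in> centre G" using zz' by (simp add: centre_def)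
qed

lemma mult_centre_commute:
  assumes a: "a \<in> carrier G" and b: "b \<in> carrier G" and ab: "a \<otimes> b = b \<otimes> a"
    and z: "z \<in> centre G" and z': "z' \<in> centre G"
  shows "(a \<otimes> z) \<otimes> (b \<otimes> z') = (b \<otimes> z') \<otimes> (a \<otimes> z)"
proof -
  have zc: "z \<in> carrier G" and z'c: "z' \<in> carrier G" using z z' by (auto simp: centre_def)
  have "z \<otimes> (b \<otimes> z') = (b \<otimes> z') \<otimes> z" using b z'c by (intro centre_commute[OF z]) simp
  then have "(a \<otimes> z) \<otimes> (b \<otimes> z') = (a \<otimes> b) \<otimes> (z' \<otimes> z)"
    using a b zc z'c by (simp add: m_assoc)
  moreover have "z' \<otimes> (a \<otimes> z) = (a \<otimes> z) \<otimes> z'" using a zc by (intro centre_commute[OF z']) simp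
  then have "(b \<otimes> z') \<otimes> (a \<otimes> z) = (b \<otimes> a) \<otimes> (z \<otimes> z')"
    using a b zc z'c by (simp add: m_assoc)
  ultimately show ?thesis using ab centre_commute[OF z z'c] by simp
qed
end

context raag
begin

lemma generators_commute:
  assumes "(v, w) \<in> E" "v \<in> V" "w \<in> V"
  shows "generator v \<otimes>\<^bsub>A\<^esub> generator w = generator w \<otimes>\<^bsub>A\<^esub> generator v"
proof -
  have "raag_step E [(v, True), (w, True)] [(w, True), (v, True)]"
    using raag_step.commute[of "(v, True)" "(w, True)" E "[]" "[]"] assms(1) by simp
  then have "word_class [(v, True), (w, True)] = word_class [(w, True), (v, True)]"
    using assms(2,3) by (intro word_class_eqI raag_step_imp_raag_rel) auto
  then show ?thesis
    using assms(2,3) by (simp add: generator_def mult_word_class)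
qed

lemma social_generator_in_centre:
  assumes "social V E s"
  shows "generator s \<in> centre A"
proof -
  have s: "s \<in> V" using assms by (simp add: social_def)
  have gen: "generator s \<otimes>\<^bsub>A\<^esub> generator v = generator v \<otimes>\<^bsub>A\<^esub> generator s" if "v \<in> V" for v
  proof (cases "v = s")
    case False
    then show ?thesis using that assms s generators_commute[of s v] by (simp add: social_def)
  qed simp
  have "generator s \<otimes>\<^bsub>A\<^esub> P = P \<otimes>\<^bsub>A\<^esub> generator s" if "P \<in> carrier A" for P
  proof -
    obtain u where u: "u \<in> words V" "P = word_class u" using \<open>P \<in> carrier A\<close> by (rule carrier_RAAGE)
    show ?thesis
      using word_eval_commute[OF generator_image generator_closed[OF s] gen u(1)] u
      by (simp add: word_class_eq_word_eval)
  qed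
  then show ?thesis using s by (simp add: centre_def)
qed

definition exponent_sum :: "'a \<Rightarrow> 'a letter list set \<Rightarrow> int" where
  "exponent_sum s = lift integer_group (\<lambda>v. if v = s then 1 else 0)"

lemma edge_commuting_integer_group: "edge_commuting V E integer_group g"
  by (simp add: edge_commuting_def)

lemma exponent_sum_hom: "exponent_sum s \<in> hom A integer_group"
  unfolding exponent_sum_def by (rule lift_hom) (simp_all add: edge_commuting_integer_group)

lemma exponent_sum_generator: "v \<in> V \<Longrightarrow> exponent_sum s (generator v) = (if v = s then 1 else 0)"
  unfolding exponent_sum_def by (rule lift_generator) (simp_all add: edge_commuting_integer_group)

lemma exponent_sum_mult:
  "P \<in> carrier A \<Longrightarrow> Q \<in> carrier A \<Longrightarrow> exponent_sum s (P \<otimes>\<^bsub>A\<^esub> Q) = exponent_sum s P + exponent_sum s Q"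
  using hom_mult[OF exponent_sum_hom] by simp

lemma exponent_sum_int_pow:
  "P \<in> carrier A \<Longrightarrow> exponent_sum s (P [^]\<^bsub>A\<^esub> (k::int)) = k * exponent_sum s P"
  using hom_int_pow[OF exponent_sum_hom _ is_group group_integer_group] by simp

definition central_twist :: "('a \<Rightarrow> 'a letter list set) \<Rightarrow> 'a letter list set \<Rightarrow> 'a letter list set" where
  "central_twist z = lift A (\<lambda>v. generator v \<otimes>\<^bsub>A\<^esub> z v)"

lemma twisted_generators_closed: "z ` V \<subseteq> centre A \<Longrightarrow> (\<lambda>v. generator v \<otimes>\<^bsub>A\<^esub> z v) ` V \<subseteq> carrier A"
  by (auto simp: centre_def)

lemma twisted_generators_edge_commuting:
  "z ` V \<subseteq> centre A \<Longrightarrow> edge_commuting V E A (\<lambda>v. generator v \<otimes>\<^bsub>A\<^esub> z v)"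
  unfolding edge_commuting_def
  by (intro allI impI mult_centre_commute generators_commute generator_closed) auto

lemma central_twist_hom: "z ` V \<subseteq> centre A \<Longrightarrow> central_twist z \<in> hom A A"
  unfolding central_twist_def
  by (intro lift_hom is_group twisted_generators_closed twisted_generators_edge_commuting)

lemma central_twist_generator:
  "z ` V \<subseteq> centre A \<Longrightarrow> v \<in> V \<Longrightarrow> central_twist z (generator v) = generator v \<otimes>\<^bsub>A\<^esub> z v"
  unfolding central_twist_def
  by (intro lift_generator is_group twisted_generators_closed twisted_generators_edge_commuting)

lemma central_twist_extensional: "central_twist z \<in> extensional (carrier A)"
  by (simp add: central_twist_def lift_def)

lemma central_twist_compose:
  assumes z: "z ` V \<subseteq> centre A" and w: "w ` V \<subseteq> centre A"
    and fixes_w: "\<And>v. v \<in> V \<Longrightarrow> central_twist z (w v) = w v" and P: "P \<in> carrier A"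
  shows "central_twist z (central_twist w P) = central_twist (\<lambda>v. z v \<otimes>\<^bsub>A\<^esub> w v) P"
proof -
  have zw: "(\<lambda>v. z v \<otimes>\<^bsub>A\<^esub> w v) ` V \<subseteq> centre A"
    using z w subgroup.m_closed[OF subgroup_centre] by auto
  have "(central_twist z \<circ> central_twist w) P = central_twist (\<lambda>v. z v \<otimes>\<^bsub>A\<^esub> w v) P"
  proof (rule hom_eqI_on_generators[OF is_group _ central_twist_hom[OF zw] _ P])
    show "central_twist z \<circ> central_twist w \<in> hom A A"
      by (rule Group.hom_compose[OF central_twist_hom[OF w] central_twist_hom[OF z]])
  next
    fix v assume v: "v \<in> V"
    have zv: "z v \<in> carrier A" and wv: "w v \<in> carrier A" using z w v by (auto simp: centre_def)
    have "central_twist z (generator v \<otimes>\<^bsub>A\<^esub> w v) = (generator v \<otimes>\<^bsub>A\<^esub> z v) \<otimes>\<^bsub>A\<^esub> w v"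
      using v wv fixes_w[OF v]
      by (simp add: hom_mult[OF central_twist_hom[OF z]] central_twist_generator[OF z])
    then show "(central_twist z \<circ> central_twist w) (generator v)
        = central_twist (\<lambda>v. z v \<otimes>\<^bsub>A\<^esub> w v) (generator v)"
      using v zv wv by (simp add: central_twist_generator[OF w] central_twist_generator[OF zw] m_assoc)
  qed
  then show ?thesis by simp
qed

lemma central_twist_trivial:
  assumes "P \<in> carrier A"
  shows "central_twist (\<lambda>v. \<one>\<^bsub>A\<^esub>) P = P"
proof -
  have one: "(\<lambda>v. \<one>\<^bsub>A\<^esub>) ` V \<subseteq> centre A"
    using subgroup.one_closed[OF subgroup_centre] by auto
  have id: "id \<in> hom A A" using id_iso[of A] by (simp add: iso_def)
  have "central_twist (\<lambda>v. \<one>\<^bsub>A\<^esub>) P = id P"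
  proof (rule hom_eqI_on_generators[OF is_group central_twist_hom[OF one] id _ assms])
    fix v assume "v \<in> V"
    then show "central_twist (\<lambda>v. \<one>\<^bsub>A\<^esub>) (generator v) = id (generator v)"
      by (simp add: central_twist_generator[OF one])
  qed
  then show ?thesis by simp
qed

end

section \<open>Lateral twists\<close>

locale raag_socials = raag +
  fixes sl :: "'a list"
  assumes set_sl: "set sl = {s. social V E s}" and distinct_sl: "distinct sl"
begin

abbreviation \<Delta> :: "'a set" where
  "\<Delta> \<equiv> V - set sl"

lemma social_in_V: "s \<in> set sl \<Longrightarrow> s \<in> V"
  using set_sl by (auto simp: social_def)

lemma social_generator_central: "s \<in> set sl \<Longrightarrow> generator s \<in> centre A"
  using set_sl social_generator_in_centre by auto

text \<open>The list \<open>ts\<close> fixes an order of the factors, which is irrelevant since they are central.\<close>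

definition social_product :: "'a list \<Rightarrow> ('a \<times> 'a \<Rightarrow>\<^sub>0 int) \<Rightarrow> 'a \<Rightarrow> 'a letter list set" where
  "social_product ts c a =
     foldr (\<lambda>s r. generator s [^]\<^bsub>A\<^esub> Poly_Mapping.lookup c (s, a) \<otimes>\<^bsub>A\<^esub> r) ts \<one>\<^bsub>A\<^esub>"

lemma social_product_Nil [simp]: "social_product [] c a = \<one>\<^bsub>A\<^esub>"
  by (simp add: social_product_def)

lemma social_product_Cons [simp]:
  "social_product (t # ts) c a = generator t [^]\<^bsub>A\<^esub> Poly_Mapping.lookup c (t, a) \<otimes>\<^bsub>A\<^esub> social_product ts c a"
  by (simp add: social_product_def)

lemma social_product_central: "set ts \<subseteq> set sl \<Longrightarrow> social_product ts c a \<in> centre A"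
  by (induction ts) (auto intro!: subgroup.m_closed[OF subgroup_centre] subgroup.one_closed[OF subgroup_centre]
      subgroup_int_pow_closed[OF subgroup_centre] social_generator_central)

lemma social_product_closed: "set ts \<subseteq> set sl \<Longrightarrow> social_product ts c a \<in> carrier A"
  using social_product_central by (simp add: centre_def)

lemma social_product_add:
  "set ts \<subseteq> set sl \<Longrightarrow> social_product ts c a \<otimes>\<^bsub>A\<^esub> social_product ts d a = social_product ts (c + d) a"
proof (induction ts)
  case (Cons t ts)
  let ?x = "generator t [^]\<^bsub>A\<^esub> Poly_Mapping.lookup c (t, a)"
    and ?y = "generator t [^]\<^bsub>A\<^esub> Poly_Mapping.lookup d (t, a)"
  have t: "t \<in> V" and ts: "set ts \<subseteq> set sl" using Cons.prems social_in_V by auto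
  have xy: "?x \<in> carrier A" "?y \<in> carrier A" using t by auto
  have P: "social_product ts c a \<in> carrier A" "social_product ts d a \<in> carrier A"
    using social_product_closed[OF ts] by auto
  have "social_product (t # ts) c a \<otimes>\<^bsub>A\<^esub> social_product (t # ts) d a
      = ?x \<otimes>\<^bsub>A\<^esub> ((social_product ts c a \<otimes>\<^bsub>A\<^esub> ?y) \<otimes>\<^bsub>A\<^esub> social_product ts d a)"
    using xy P by (simp add: m_assoc)
  also have "\<dots> = (?x \<otimes>\<^bsub>A\<^esub> ?y) \<otimes>\<^bsub>A\<^esub> (social_product ts c a \<otimes>\<^bsub>A\<^esub> social_product ts d a)"
    using xy P centre_commute[OF social_product_central[OF ts] xy(2)] by (simp add: m_assoc)
  finally show ?case
    using Cons.IH[OF ts] t by (simp add: Poly_Mapping.lookup_add int_pow_mult)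
qed simp

lemma social_product_eq_one:
  "(\<And>t. t \<in> set ts \<Longrightarrow> Poly_Mapping.lookup c (t, a) = 0) \<Longrightarrow> set ts \<subseteq> set sl \<Longrightarrow>
    social_product ts c a = \<one>\<^bsub>A\<^esub>"
  by (induction ts) (auto dest: social_in_V)

lemma hom_social_product:
  assumes h: "h \<in> hom A A" and fixes_social: "\<And>s. s \<in> set sl \<Longrightarrow> h (generator s) = generator s"
  shows "set ts \<subseteq> set sl \<Longrightarrow> h (social_product ts c a) = social_product ts c a"
proof (induction ts)
  case Nil
  then show ?case by (simp add: hom_one[OF h])
next
  case (Cons t ts)
  have t: "t \<in> set sl" "t \<in> V" and ts: "set ts \<subseteq> set sl" using Cons.prems social_in_V by auto
  have "h (generator t [^]\<^bsub>A\<^esub> Poly_Mapping.lookup c (t, a)) = generator t [^]\<^bsub>A\<^esub> Poly_Mapping.lookup c (t, a)"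
    using hom_int_pow[OF h generator_closed[OF t(2)] is_group is_group] fixes_social[OF t(1)] by simp
  then show ?case
    using Cons.IH[OF ts] t social_product_closed[OF ts] by (simp add: hom_mult[OF h])
qed

lemma exponent_sum_social_product:
  "distinct ts \<Longrightarrow> set ts \<subseteq> set sl \<Longrightarrow>
    exponent_sum s (social_product ts c a) = (if s \<in> set ts then Poly_Mapping.lookup c (s, a) else 0)"
proof (induction ts)
  case Nil
  then show ?case using hom_one[OF exponent_sum_hom is_group group_integer_group] by simp
next
  case (Cons t ts)
  have t: "t \<in> V" and ts: "set ts \<subseteq> set sl" using Cons.prems social_in_V by auto
  then show ?case
    using Cons social_product_closed[OF ts]
    by (auto simp: exponent_sum_mult exponent_sum_int_pow exponent_sum_generator)
qed

lemma social_product_frag_of: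
  "distinct ts \<Longrightarrow> set ts \<subseteq> set sl \<Longrightarrow> s \<in> set ts \<Longrightarrow> social_product ts (frag_of (s, a)) a = generator s"
proof (induction ts)
  case (Cons t ts)
  have t: "t \<in> V" and ts: "set ts \<subseteq> set sl" and s: "s \<in> V"
    using Cons.prems social_in_V by auto
  show ?case
  proof (cases "t = s")
    case True
    then have "social_product ts (frag_of (s, a)) a = \<one>\<^bsub>A\<^esub>"
      using Cons.prems ts by (intro social_product_eq_one) auto
    then show ?thesis using True t by simp
  next
    case False
    then show ?thesis using Cons t ts s by simp
  qed
qed simp

definition lateral_factor :: "('a \<times> 'a \<Rightarrow>\<^sub>0 int) \<Rightarrow> 'a \<Rightarrow> 'a letter list set" where
  "lateral_factor c v = (if v \<in> \<Delta> then social_product sl c v else \<one>\<^bsub>A\<^esub>)"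

definition lateral_twist :: "('a \<times> 'a \<Rightarrow>\<^sub>0 int) \<Rightarrow> 'a letter list set \<Rightarrow> 'a letter list set" where
  "lateral_twist c = central_twist (lateral_factor c)"

lemma lateral_factor_central: "lateral_factor c ` V \<subseteq> centre A"
  using social_product_central[of sl] subgroup.one_closed[OF subgroup_centre]
  by (auto simp: lateral_factor_def)

lemma lateral_factor_add: "lateral_factor c v \<otimes>\<^bsub>A\<^esub> lateral_factor d v = lateral_factor (c + d) v"
  by (simp add: lateral_factor_def social_product_add)

lemma lateral_factor_zero: "lateral_factor 0 = (\<lambda>v. \<one>\<^bsub>A\<^esub>)"
  unfolding lateral_factor_def by (rule ext) (simp add: social_product_eq_one)

lemma lateral_twist_hom: "lateral_twist c \<in> hom A A"
  unfolding lateral_twist_def by (rule central_twist_hom[OF lateral_factor_central])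

lemma lateral_twist_generator:
  "v \<in> V \<Longrightarrow> lateral_twist c (generator v) = generator v \<otimes>\<^bsub>A\<^esub> lateral_factor c v"
  unfolding lateral_twist_def by (rule central_twist_generator[OF lateral_factor_central])

lemma lateral_twist_lateral_factor: "lateral_twist c (lateral_factor d v) = lateral_factor d v"
proof -
  have "lateral_twist c (generator s) = generator s" if "s \<in> set sl" for s
    using that social_in_V by (simp add: lateral_twist_generator lateral_factor_def)
  then show ?thesis
    using hom_social_product[OF lateral_twist_hom] hom_one[OF lateral_twist_hom]
    by (simp add: lateral_factor_def)
qed

lemma lateral_twist_compose:
  "P \<in> carrier A \<Longrightarrow> lateral_twist c (lateral_twist d P) = lateral_twist (c + d) P"
  unfolding lateral_twist_def
  using central_twist_compose[OF lateral_factor_central lateral_factor_central]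
    lateral_twist_lateral_factor
  by (simp add: lateral_twist_def lateral_factor_add)

lemma lateral_twist_zero: "P \<in> carrier A \<Longrightarrow> lateral_twist 0 P = P"
  by (simp add: lateral_twist_def lateral_factor_zero central_twist_trivial)

lemma lateral_twist_auto: "lateral_twist c \<in> auto A"
proof -
  have "bij_betw (lateral_twist c) (carrier A) (carrier A)"
    by (rule bij_betw_byWitness[where f' = "lateral_twist (- c)"])
      (auto simp: lateral_twist_compose lateral_twist_zero hom_in_carrier[OF lateral_twist_hom])
  then show ?thesis
    using lateral_twist_hom central_twist_extensional
    by (simp add: auto_def Bij_def lateral_twist_def)
qed

abbreviation Aut :: "('a letter list set \<Rightarrow> 'a letter list set) monoid" where
  "Aut \<equiv> AutoGroup A"

lemma lateral_twist_in_Aut: "lateral_twist c \<in> carrier Aut"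
  using lateral_twist_auto by (simp add: AutoGroup_def BijGroup_def)

lemma lateral_twist_undefined: "P \<notin> carrier A \<Longrightarrow> lateral_twist c P = undefined"
  by (simp add: lateral_twist_def central_twist_def lift_def)

lemma lateral_twist_mult: "lateral_twist c \<otimes>\<^bsub>Aut\<^esub> lateral_twist d = lateral_twist (c + d)"
proof -
  have "lateral_twist c \<otimes>\<^bsub>Aut\<^esub> lateral_twist d = compose (carrier A) (lateral_twist c) (lateral_twist d)"
    using lateral_twist_auto by (simp add: AutoGroup_def BijGroup_def auto_def)
  also have "\<dots> = lateral_twist (c + d)"
  proof
    fix P show "compose (carrier A) (lateral_twist c) (lateral_twist d) P = lateral_twist (c + d) P"
      by (cases "P \<in> carrier A") (simp_all add: compose_def lateral_twist_compose lateral_twist_undefined)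
  qed
  finally show ?thesis .
qed

lemma lateral_twist_zero_eq_one: "lateral_twist 0 = \<one>\<^bsub>Aut\<^esub>"
proof
  fix P show "lateral_twist 0 P = \<one>\<^bsub>Aut\<^esub> P"
    by (cases "P \<in> carrier A") (simp_all add: AutoGroup_def BijGroup_def lateral_twist_zero lateral_twist_undefined)
qed

lemma inv_lateral_twist: "inv\<^bsub>Aut\<^esub> lateral_twist c = lateral_twist (- c)"
  using lateral_twist_mult[of "- c" c] lateral_twist_zero_eq_one
  by (intro group.inv_equality[OF AutoGroup _ lateral_twist_in_Aut lateral_twist_in_Aut]) simp

lemma word_class_transv_letter:
  assumes s: "s \<in> set sl" and a: "a \<in> \<Delta>" and v: "v \<in> V"
  shows "word_class (transv_letter s a (v, True)) = generator v \<otimes>\<^bsub>A\<^esub> lateral_factor (frag_of (s, a)) v"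
proof (cases "v = a")
  case True
  have "social_product sl (frag_of (s, a)) a = generator s"
    using social_product_frag_of[OF distinct_sl _ s] by simp
  then show ?thesis
    using True s a social_in_V by (simp add: transv_letter_def lateral_factor_def generator_def mult_word_class)
next
  case False
  have "social_product sl (frag_of (s, a)) v = \<one>\<^bsub>A\<^esub>"
    using False by (intro social_product_eq_one) auto
  then have "lateral_factor (frag_of (s, a)) v = \<one>\<^bsub>A\<^esub>"
    by (simp add: lateral_factor_def)
  then show ?thesis
    using False v by (simp add: transv_letter_def generator_def)
qed

lemma lateral_transvection_eq_lateral_twist:
  assumes s: "s \<in> set sl" and a: "a \<in> \<Delta>"
  shows "lateral_transvection V E s a = lateral_twist (frag_of (s, a))"
proof
  fix P
  show "lateral_transvection V E s a P = lateral_twist (frag_of (s, a)) P"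
  proof (cases "P \<in> carrier A")
    case True
    let ?u = "SOME u. u \<in> P"
    have u: "?u \<in> words V" using some_rep_in_words[OF True] .
    have "lateral_transvection V E s a P = word_eval A (\<lambda>v. word_class (transv_letter s a (v, True))) ?u"
      using True u s a social_in_V
      by (simp add: lateral_transvection_def word_class_concat_map transv_letter_in_words
          transv_letter_inv_letter)
    also have "\<dots> = word_eval A (\<lambda>v. generator v \<otimes>\<^bsub>A\<^esub> lateral_factor (frag_of (s, a)) v) ?u"
      using s a u by (intro word_eval_cong) (simp_all add: word_class_transv_letter)
    also have "\<dots> = lateral_twist (frag_of (s, a)) P"
      using True by (simp add: lateral_twist_def central_twist_def lift_def)
    finally show ?thesis .
  next
    case False
    then show ?thesis
      by (simp add: lateral_transvection_def lateral_twist_def central_twist_def lift_def)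
  qed
qed

lemma exponent_sum_lateral_twist:
  assumes s: "s \<in> set sl" and a: "a \<in> \<Delta>"
  shows "exponent_sum s (lateral_twist c (generator a)) = Poly_Mapping.lookup c (s, a)"
  using s a social_product_closed[of sl] exponent_sum_social_product[OF distinct_sl]
  by (auto simp: lateral_twist_generator lateral_factor_def exponent_sum_mult exponent_sum_generator)

lemma lateral_twist_inj:
  assumes "Poly_Mapping.keys c \<subseteq> set sl \<times> \<Delta>" "Poly_Mapping.keys d \<subseteq> set sl \<times> \<Delta>"
    and "lateral_twist c = lateral_twist d"
  shows "c = d"
proof (rule poly_mapping_eqI)
  fix k
  show "Poly_Mapping.lookup c k = Poly_Mapping.lookup d k"
  proof (cases "k \<in> set sl \<times> \<Delta>")
    case True
    then show ?thesis
      using exponent_sum_lateral_twist[of "fst k" "snd k" c] exponent_sum_lateral_twist[of "fst k" "snd k" d]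
        assms(3) by (auto simp: mem_Times_iff)
  next
    case False
    then have "k \<notin> Poly_Mapping.keys c" "k \<notin> Poly_Mapping.keys d" using assms(1,2) by auto
    then show ?thesis by (simp add: Poly_Mapping.in_keys_iff)
  qed
qed

definition lateral_transvections :: "('a letter list set \<Rightarrow> 'a letter list set) set" where
  "lateral_transvections = {lateral_transvection V E s a | s a. s \<in> set sl \<and> a \<in> \<Delta>}"

lemma lateral_transvections_eq: "lateral_transvections = (\<lambda>(s, a). lateral_twist (frag_of (s, a))) ` (set sl \<times> \<Delta>)"
  unfolding lateral_transvections_def using lateral_transvection_eq_lateral_twist by force

lemma lateral_transvections_subset: "lateral_transvections \<subseteq> carrier Aut"
  using lateral_transvections_eq lateral_twist_in_Aut by auto

lemma lateral_twist_in_generate: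
  assumes "Poly_Mapping.keys c \<subseteq> set sl \<times> \<Delta>"
  shows "lateral_twist c \<in> generate Aut lateral_transvections"
proof (rule free_Abelian_group_induct[where P = "\<lambda>c. lateral_twist c \<in> generate Aut lateral_transvections", OF assms])
  show "lateral_twist 0 \<in> generate Aut lateral_transvections"
    by (simp add: lateral_twist_zero_eq_one generate.one)
next
  fix c d
  assume "lateral_twist c \<in> generate Aut lateral_transvections" "lateral_twist d \<in> generate Aut lateral_transvections"
  moreover have "subgroup (generate Aut lateral_transvections) Aut"
    by (rule group.generate_is_subgroup[OF AutoGroup lateral_transvections_subset])
  moreover have "lateral_twist (c - d) = lateral_twist c \<otimes>\<^bsub>Aut\<^esub> inv\<^bsub>Aut\<^esub> lateral_twist d"
    by (simp add: inv_lateral_twist lateral_twist_mult)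
  ultimately show "lateral_twist (c - d) \<in> generate Aut lateral_transvections"
    by (simp add: subgroup.m_closed subgroup.m_inv_closed)
next
  fix k assume "k \<in> set sl \<times> \<Delta>"
  then show "lateral_twist (frag_of k) \<in> generate Aut lateral_transvections"
    using lateral_transvections_eq by (auto intro: generate.incl)
qed

lemma generate_lateral_transvections_subset:
  "generate Aut lateral_transvections \<subseteq> lateral_twist ` carrier (free_Abelian_group (set sl \<times> \<Delta>))"
proof
  fix h assume "h \<in> generate Aut lateral_transvections"
  then show "h \<in> lateral_twist ` carrier (free_Abelian_group (set sl \<times> \<Delta>))"
  proof (induction rule: generate.induct)
    case one
    show ?case by (rule image_eqI[of _ _ 0]) (simp_all add: lateral_twist_zero_eq_one)
  next
    case (incl h)
    then obtain s a where "s \<in> set sl" "a \<in> \<Delta>" "h = lateral_twist (frag_of (s, a))"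
      using lateral_transvections_eq by auto
    then show ?case by (intro image_eqI[of _ _ "frag_of (s, a)"]) simp_all
  next
    case (inv h)
    then obtain s a where "s \<in> set sl" "a \<in> \<Delta>" "h = lateral_twist (frag_of (s, a))"
      using lateral_transvections_eq by auto
    then show ?case by (intro image_eqI[of _ _ "- frag_of (s, a)"]) (simp_all add: inv_lateral_twist)
  next
    case (eng h h')
    then obtain c d where "Poly_Mapping.keys c \<subseteq> set sl \<times> \<Delta>" "h = lateral_twist c"
      "Poly_Mapping.keys d \<subseteq> set sl \<times> \<Delta>" "h' = lateral_twist d"
      by auto
    then show ?case
      using keys_add[of c d] by (intro image_eqI[of _ _ "c + d"]) (auto simp: lateral_twist_mult)
  qed
qed

lemma lateral_transvections_iso:
  "subgroup_generated Aut lateral_transvections \<cong> free_Abelian_group (set sl \<times> \<Delta>)"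
proof -
  let ?F = "free_Abelian_group (set sl \<times> \<Delta>)" and ?L = "subgroup_generated Aut lateral_transvections"
  have "carrier ?L = generate Aut lateral_transvections"
    using lateral_transvections_subset by (simp add: carrier_subgroup_generated Int_absorb1)
  also have "\<dots> = lateral_twist ` carrier ?F"
    using generate_lateral_transvections_subset lateral_twist_in_generate by auto
  finally have carrier_L: "carrier ?L = lateral_twist ` carrier ?F" .
  have "lateral_twist \<in> iso ?F ?L"
  proof (rule isoI)
    show "lateral_twist \<in> hom ?F ?L"
      using carrier_L by (intro homI) (auto simp: lateral_twist_mult free_Abelian_group_def)
    show "bij_betw lateral_twist (carrier ?F) (carrier ?L)"
      using carrier_L lateral_twist_inj by (simp add: bij_betw_def inj_on_def)
  qed
  then show ?thesis
    by (rule group.iso_sym[OF group_free_Abelian_group is_isoI])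
qed

end

theorem mainTheorem3:
  fixes V :: "'a set" and E :: "('a \<times> 'a) set"
  assumes "simplicial_graph V E"
    and "centre (RAAG V E) \<noteq> {\<one>\<^bsub>RAAG V E\<^esub>}"
  defines "S \<equiv> {s. social V E s}"
    and "\<Delta> \<equiv> V - {s. social V E s}"
  shows "subgroup_generated (AutoGroup (RAAG V E))
           {lateral_transvection V E s a | s a. s \<in> S \<and> a \<in> \<Delta>}
         \<cong> free_Abelian_group {..< card S * card \<Delta>}"
proof -
  have "finite V" using assms(1) by (simp add: simplicial_graph_def)
  then have finS: "finite S" and fin\<Delta>: "finite \<Delta>"
    unfolding S_def \<Delta>_def by (auto intro: finite_subset[of _ V] simp: social_def)
  obtain sl where sl: "set sl = S" "distinct sl"
    using finite_distinct_list[OF finS] by blast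
  interpret L: raag_socials V E sl
    using sl by unfold_locales (simp_all add: S_def)
  have "{lateral_transvection V E s a | s a. s \<in> S \<and> a \<in> \<Delta>} = L.lateral_transvections"
    by (simp add: L.lateral_transvections_def sl(1) S_def \<Delta>_def)
  then have "subgroup_generated (AutoGroup (RAAG V E)) {lateral_transvection V E s a | s a. s \<in> S \<and> a \<in> \<Delta>}
      \<cong> free_Abelian_group (S \<times> \<Delta>)"
    using L.lateral_transvections_iso by (simp add: sl(1) S_def \<Delta>_def)
  also have "free_Abelian_group (S \<times> \<Delta>) \<cong> free_Abelian_group {..< card S * card \<Delta>}"
    using finS fin\<Delta> eqpoll_iff_card[of "S \<times> \<Delta>" "{..< card S * card \<Delta>}"]
    by (simp add: isomorphic_free_Abelian_groups card_cartesian_product)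
  finally show ?thesis .
qed

end
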